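(* For every integer $k\geq 1$, the Dobrynin graph $\mathrm{Dob}_k$ (defined below) is interval transmission irregular; more precisely, its $2k+5$ vertices have pairwise distinct transmissions, and the set of these transmissions is $\{3k+4,3k+5,\dots,5k+8\}$.
   Context: All graphs are finite, simple and connected. For a connected graph $G$ and a vertex $u$, the transmission is $Tr_G(u)=\sum_{v\in V(G)} d_G(u,v)$, where $d_G$ is the shortest-path distance. A graph is transmission irregular (TI) if no two of its vertices have equal transmission, and interval transmission irregular (ITI) if it is TI and its set of vertex transmissions equals $[p,q]\cap\mathbb{Z}$ for some integers $p\le q$. The Dobrynin graph $\mathrm{Dob}_k$ ($k\ge1$) has vertex set $\{a,b,c,d\}\cup A\cup B\cup\{ab_1,ab_2\}$ with $A=\{a_0,a_1,\dots,a_{k-1}\}$ and $B=\{b_1,\dots,b_{k-1}\}$ (so $B=\emptyset$ when $k=1$), and edge set: $ab$; $ac$ and $bd$ (so $c,d$ are pendent); $a a_i$ for all $i$; $b b_j$ for all $j$; $a\,ab_1, b\,ab_1, a\,ab_2, b\,ab_2$; $a_i b_j$ for all $1\le j\le i\le k-1$ (so $a_i$ is adjacent to $b_1,\dots,b_i$); $ab_1 a_i$ for all $0\le i\le k-1$; and $ab_2 b_j$ for all $1\le j\le k-1$. There are no other edges. *)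

theory Defs
  imports Main
begin

fun walk :: "('a \<Rightarrow> 'a \<Rightarrow> bool) \<Rightarrow> 'a list \<Rightarrow> bool" where
  "walk E [] = False"
| "walk E [x] = True"
| "walk E (x # y # xs) = (E x y \<and> walk E (y # xs))"

definition gdist :: "'a set \<Rightarrow> ('a \<Rightarrow> 'a \<Rightarrow> bool) \<Rightarrow> 'a \<Rightarrow> 'a \<Rightarrow> nat" where
  "gdist V E u v = (LEAST n. \<exists>xs. walk E xs \<and> set xs \<subseteq> V \<and> hd xs = u \<and> last xs = v
                                 \<and> length xs = Suc n)"

definition connected_graph :: "'a set \<Rightarrow> ('a \<Rightarrow> 'a \<Rightarrow> bool) \<Rightarrow> bool" where
  "connected_graph V E = (\<forall>u\<in>V. \<forall>v\<in>V. \<exists>xs. walk E xs \<and> set xs \<subseteq> V \<and> hd xs = u \<and> last xs = v)"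

definition transmission :: "'a set \<Rightarrow> ('a \<Rightarrow> 'a \<Rightarrow> bool) \<Rightarrow> 'a \<Rightarrow> nat" where
  "transmission V E u = (\<Sum>v\<in>V. gdist V E u v)"

definition transmission_irregular :: "'a set \<Rightarrow> ('a \<Rightarrow> 'a \<Rightarrow> bool) \<Rightarrow> bool" where
  "transmission_irregular V E = inj_on (transmission V E) V"

definition interval_transmission_irregular :: "'a set \<Rightarrow> ('a \<Rightarrow> 'a \<Rightarrow> bool) \<Rightarrow> bool" where
  "interval_transmission_irregular V E =
     (transmission_irregular V E \<and> (\<exists>p q. p \<le> q \<and> transmission V E ` V = {p..q}))"

datatype dvert = Va | Vb | Vc | Vd | Vai nat | Vbj nat | Vab1 | Vab2

definition dob_V :: "nat \<Rightarrow> dvert set" where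
  "dob_V k = {Va, Vb, Vc, Vd, Vab1, Vab2} \<union> Vai ` {0..<k} \<union> Vbj ` {1..<k}"

definition dob_edge0 :: "nat \<Rightarrow> dvert \<Rightarrow> dvert \<Rightarrow> bool" where
  "dob_edge0 k x y =
     ((x = Va \<and> y = Vb) \<or> (x = Va \<and> y = Vc) \<or> (x = Vb \<and> y = Vd)
    \<or> (\<exists>i<k. x = Va \<and> y = Vai i)
    \<or> (\<exists>j. 1 \<le> j \<and> j < k \<and> x = Vb \<and> y = Vbj j)
    \<or> (x = Va \<and> y = Vab1) \<or> (x = Vb \<and> y = Vab1) \<or> (x = Va \<and> y = Vab2) \<or> (x = Vb \<and> y = Vab2)
    \<or> (\<exists>i j. 1 \<le> j \<and> j \<le> i \<and> i < k \<and> x = Vai i \<and> y = Vbj j)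
    \<or> (\<exists>i<k. x = Vab1 \<and> y = Vai i)
    \<or> (\<exists>j. 1 \<le> j \<and> j < k \<and> x = Vab2 \<and> y = Vbj j))"

definition dob_E :: "nat \<Rightarrow> dvert \<Rightarrow> dvert \<Rightarrow> bool" where
  "dob_E k x y = (dob_edge0 k x y \<or> dob_edge0 k y x)"

end

theory Submission
  imports Defs
begin

(* All distances in Dob_k are at most 3 and can be written down explicitly; a labelling that is
   1-Lipschitz along edges and drops by one along some edge towards u at every other vertex is
   the distance from u.  Summing the table gives Tr(a) = 3k+4, Tr(b) = 3k+5, Tr(ab_1) = 3k+6,
   Tr(ab_2) = 3k+7, Tr(c) = 5k+7, Tr(d) = 5k+8, Tr(b_j) = 3k+7+2j and Tr(a_i) = 5k+6-2i.
   The values of the b_j and of the a_i have opposite parities, so they interleave and fill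
   3k+8 .. 5k+6 without collision. *)

lemma walk_snoc: "xs \<noteq> [] \<Longrightarrow> walk E (xs @ [y]) \<longleftrightarrow> walk E xs \<and> E (last xs) y"
  by (induction E xs rule: walk.induct) auto

lemma walk_last_le:
  assumes "walk E xs" "set xs \<subseteq> V" "\<forall>x\<in>V. \<forall>y\<in>V. E x y \<longrightarrow> f y \<le> f x + 1"
  shows "f (last xs) \<le> f (hd xs) + (length xs - 1)"
  using assms
proof (induction E xs rule: walk.induct)
  case (3 E x y xs)
  then have "f (last (y # xs)) \<le> f y + length xs" "f y \<le> f x + 1" by auto
  then show ?case by simp
qed auto

definition bfs_labelling :: "'a set \<Rightarrow> ('a \<Rightarrow> 'a \<Rightarrow> bool) \<Rightarrow> 'a \<Rightarrow> ('a \<Rightarrow> nat) \<Rightarrow> bool" where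
  "bfs_labelling V E u f \<longleftrightarrow> f u = 0
     \<and> (\<forall>v\<in>V. v \<noteq> u \<longrightarrow> (\<exists>w\<in>V. E w v \<and> f v = f w + 1))
     \<and> (\<forall>x\<in>V. \<forall>y\<in>V. E x y \<longrightarrow> f y \<le> f x + 1)"

lemma bfs_labelling_walk:
  assumes f: "bfs_labelling V E u f" and "u \<in> V" "v \<in> V"
  shows "\<exists>xs. walk E xs \<and> set xs \<subseteq> V \<and> hd xs = u \<and> last xs = v \<and> length xs = Suc (f v)"
  using \<open>v \<in> V\<close>
proof (induction "f v" arbitrary: v)
  case 0
  with f have "v = u" "f u = 0" unfolding bfs_labelling_def by fastforce+
  with \<open>u \<in> V\<close> show ?case by (intro exI[of _ "[u]"]) auto
next
  case (Suc n)
  with f have "v \<noteq> u" unfolding bfs_labelling_def by auto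
  with f Suc.prems obtain w where w: "w \<in> V" "E w v" "f v = f w + 1"
    unfolding bfs_labelling_def by blast
  with Suc.hyps(2) have "n = f w" by simp
  with Suc.hyps(1) \<open>w \<in> V\<close> obtain xs
    where xs: "walk E xs" "set xs \<subseteq> V" "hd xs = u" "last xs = w" "length xs = Suc n"
    by blast
  then have "xs \<noteq> []" by auto
  with xs w Suc show ?case
    by (intro exI[of _ "xs @ [v]"]) (auto simp: walk_snoc hd_append)
qed

lemma gdist_eq_bfs_labelling:
  assumes f: "bfs_labelling V E u f" and "u \<in> V" "v \<in> V"
  shows "gdist V E u v = f v"
  unfolding gdist_def
proof (rule Least_equality)
  show "\<exists>xs. walk E xs \<and> set xs \<subseteq> V \<and> hd xs = u \<and> last xs = v \<and> length xs = Suc (f v)"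
    using bfs_labelling_walk[OF assms] .
next
  fix n
  assume "\<exists>xs. walk E xs \<and> set xs \<subseteq> V \<and> hd xs = u \<and> last xs = v \<and> length xs = Suc n"
  then obtain xs where "walk E xs" "set xs \<subseteq> V" "hd xs = u" "last xs = v" "length xs = Suc n"
    by blast
  with walk_last_le[of E xs V f] f show "f v \<le> n" unfolding bfs_labelling_def by simp
qed

lemma connected_graph_if_bfs_labellings:
  assumes "\<And>u. u \<in> V \<Longrightarrow> bfs_labelling V E u (d u)"
  shows "connected_graph V E"
  unfolding connected_graph_def using assms bfs_labelling_walk by metis

lemma sum_if_eq_zero:
  assumes "finite A" "i \<in> A"
  shows "(\<Sum>l\<in>A. if l = i then 0 else c) = (c::nat) * (card A - 1)"
proof -
  have "(\<Sum>l\<in>A. if l = i then 0 else c) = (\<Sum>l\<in>A - {i}. c)"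
    using assms by (subst sum.remove[of _ i]) (auto intro!: sum.cong)
  with assms show ?thesis by simp
qed

lemma sum_atLeastLessThan_if_le:
  "(\<Sum>j\<in>{1..<k}. if j \<le> i then 1 else 3) = min i (k - 1) + 3 * (k - 1 - (i::nat))"
proof (induction k)
  case (Suc k)
  show ?case
  proof (cases "k = 0")
    case False
    then have "{1..<Suc k} = insert k {1..<k}" by auto
    with Suc False show ?thesis by simp arith
  qed simp
qed simp

lemma sum_lessThan_if_ge:
  "1 \<le> j \<Longrightarrow> (\<Sum>i<k. if j \<le> i then 1 else 3) = (k - j) + 3 * min j (k::nat)"
  by (induction k) auto

fun dob_dist :: "dvert \<Rightarrow> dvert \<Rightarrow> nat" where
  "dob_dist Va v = (case v of Va \<Rightarrow> 0 | Vb \<Rightarrow> 1 | Vc \<Rightarrow> 1 | Vd \<Rightarrow> 2 | Vai _ \<Rightarrow> 1 | Vbj _ \<Rightarrow> 2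
     | Vab1 \<Rightarrow> 1 | Vab2 \<Rightarrow> 1)"
| "dob_dist Vb v = (case v of Va \<Rightarrow> 1 | Vb \<Rightarrow> 0 | Vc \<Rightarrow> 2 | Vd \<Rightarrow> 1 | Vai _ \<Rightarrow> 2 | Vbj _ \<Rightarrow> 1
     | Vab1 \<Rightarrow> 1 | Vab2 \<Rightarrow> 1)"
| "dob_dist Vc v = (case v of Va \<Rightarrow> 1 | Vb \<Rightarrow> 2 | Vc \<Rightarrow> 0 | Vd \<Rightarrow> 3 | Vai _ \<Rightarrow> 2 | Vbj _ \<Rightarrow> 3
     | Vab1 \<Rightarrow> 2 | Vab2 \<Rightarrow> 2)"
| "dob_dist Vd v = (case v of Va \<Rightarrow> 2 | Vb \<Rightarrow> 1 | Vc \<Rightarrow> 3 | Vd \<Rightarrow> 0 | Vai _ \<Rightarrow> 3 | Vbj _ \<Rightarrow> 2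
     | Vab1 \<Rightarrow> 2 | Vab2 \<Rightarrow> 2)"
| "dob_dist Vab1 v = (case v of Va \<Rightarrow> 1 | Vb \<Rightarrow> 1 | Vc \<Rightarrow> 2 | Vd \<Rightarrow> 2 | Vai _ \<Rightarrow> 1 | Vbj _ \<Rightarrow> 2
     | Vab1 \<Rightarrow> 0 | Vab2 \<Rightarrow> 2)"
| "dob_dist Vab2 v = (case v of Va \<Rightarrow> 1 | Vb \<Rightarrow> 1 | Vc \<Rightarrow> 2 | Vd \<Rightarrow> 2 | Vai _ \<Rightarrow> 2 | Vbj _ \<Rightarrow> 1
     | Vab1 \<Rightarrow> 2 | Vab2 \<Rightarrow> 0)"
| "dob_dist (Vai i) v = (case v of Va \<Rightarrow> 1 | Vb \<Rightarrow> 2 | Vc \<Rightarrow> 2 | Vd \<Rightarrow> 3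
     | Vai l \<Rightarrow> (if l = i then 0 else 2) | Vbj j \<Rightarrow> (if j \<le> i then 1 else 3)
     | Vab1 \<Rightarrow> 1 | Vab2 \<Rightarrow> 2)"
| "dob_dist (Vbj j) v = (case v of Va \<Rightarrow> 2 | Vb \<Rightarrow> 1 | Vc \<Rightarrow> 3 | Vd \<Rightarrow> 2
     | Vai i \<Rightarrow> (if j \<le> i then 1 else 3) | Vbj l \<Rightarrow> (if l = j then 0 else 2)
     | Vab1 \<Rightarrow> 2 | Vab2 \<Rightarrow> 1)"

fun dob_parent :: "dvert \<Rightarrow> dvert \<Rightarrow> dvert" where
  "dob_parent Va v = (case v of Vd \<Rightarrow> Vb | Vbj _ \<Rightarrow> Vb | _ \<Rightarrow> Va)"
| "dob_parent Vb v = (case v of Vc \<Rightarrow> Va | Vai _ \<Rightarrow> Va | _ \<Rightarrow> Vb)"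
| "dob_parent Vc v = (case v of Va \<Rightarrow> Vc | Vd \<Rightarrow> Vb | Vbj _ \<Rightarrow> Vb | _ \<Rightarrow> Va)"
| "dob_parent Vd v = (case v of Vb \<Rightarrow> Vd | Vc \<Rightarrow> Va | Vai _ \<Rightarrow> Va | _ \<Rightarrow> Vb)"
| "dob_parent Vab1 v = (case v of Vc \<Rightarrow> Va | Vab2 \<Rightarrow> Va | Vd \<Rightarrow> Vb | Vbj _ \<Rightarrow> Vb | _ \<Rightarrow> Vab1)"
| "dob_parent Vab2 v = (case v of Vc \<Rightarrow> Va | Vab1 \<Rightarrow> Va | Vai _ \<Rightarrow> Va | Vd \<Rightarrow> Vb | _ \<Rightarrow> Vab2)"
| "dob_parent (Vai i) v = (case v of Va \<Rightarrow> Vai i | Vab1 \<Rightarrow> Vai i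
     | Vbj j \<Rightarrow> (if j \<le> i then Vai i else Vb) | Vd \<Rightarrow> Vb | _ \<Rightarrow> Va)"
| "dob_parent (Vbj j) v = (case v of Vb \<Rightarrow> Vbj j | Vab2 \<Rightarrow> Vbj j
     | Vai i \<Rightarrow> (if j \<le> i then Vbj j else Va) | Vc \<Rightarrow> Va | _ \<Rightarrow> Vb)"

lemma mem_dob_V:
  "v \<in> dob_V k \<longleftrightarrow> (case v of Vai i \<Rightarrow> i < k | Vbj j \<Rightarrow> 1 \<le> j \<and> j < k | _ \<Rightarrow> True)"
  unfolding dob_V_def by (cases v) auto

lemma dob_dist_edge_le: "dob_E k x y \<Longrightarrow> dob_dist u y \<le> dob_dist u x + 1"
  unfolding dob_E_def dob_edge0_def by (cases u) auto

lemma dob_parent: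
  assumes "u \<in> dob_V k" "v \<in> dob_V k" "v \<noteq> u"
  shows "dob_parent u v \<in> dob_V k \<and> dob_E k (dob_parent u v) v
    \<and> dob_dist u v = dob_dist u (dob_parent u v) + 1"
  using assms unfolding mem_dob_V dob_E_def dob_edge0_def
  by (cases u; cases v) (auto split: if_splits)

lemma bfs_labelling_dob_dist:
  assumes "u \<in> dob_V k"
  shows "bfs_labelling (dob_V k) (dob_E k) u (dob_dist u)"
  unfolding bfs_labelling_def
proof (intro conjI ballI impI)
  show "dob_dist u u = 0" by (cases u) auto
next
  fix v assume "v \<in> dob_V k" "v \<noteq> u"
  with assms dob_parent show "\<exists>w\<in>dob_V k. dob_E k w v \<and> dob_dist u v = dob_dist u w + 1"
    by blast
qed (rule dob_dist_edge_le)

lemma gdist_dob: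
  "u \<in> dob_V k \<Longrightarrow> v \<in> dob_V k \<Longrightarrow> gdist (dob_V k) (dob_E k) u v = dob_dist u v"
  by (rule gdist_eq_bfs_labelling[OF bfs_labelling_dob_dist])

lemma sum_dob_V:
  "sum g (dob_V k) = g Va + g Vb + g Vc + g Vd + g Vab1 + g Vab2
     + (\<Sum>i<k. g (Vai i)) + (\<Sum>j\<in>{1..<k}. g (Vbj j))"
proof -
  have V: "dob_V k = {Va, Vb, Vc, Vd, Vab1, Vab2} \<union> (Vai ` {..<k} \<union> Vbj ` {1..<k})"
    unfolding dob_V_def by auto
  have "sum g (dob_V k) = sum g {Va, Vb, Vc, Vd, Vab1, Vab2} + sum g (Vai ` {..<k} \<union> Vbj ` {1..<k})"
    unfolding V by (rule sum.union_disjoint) auto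
  also have "sum g (Vai ` {..<k} \<union> Vbj ` {1..<k}) = sum g (Vai ` {..<k}) + sum g (Vbj ` {1..<k})"
    by (rule sum.union_disjoint) auto
  finally show ?thesis by (simp add: sum.reindex inj_on_def ac_simps)
qed

lemma card_dob_V: "k \<ge> 1 \<Longrightarrow> card (dob_V k) = 2 * k + 5"
  using sum_dob_V[of "\<lambda>_. 1::nat" k] by simp

definition dob_transmission :: "nat \<Rightarrow> dvert \<Rightarrow> nat" where
  "dob_transmission k v = (case v of Va \<Rightarrow> 3*k+4 | Vb \<Rightarrow> 3*k+5 | Vab1 \<Rightarrow> 3*k+6 | Vab2 \<Rightarrow> 3*k+7
     | Vc \<Rightarrow> 5*k+7 | Vd \<Rightarrow> 5*k+8 | Vai i \<Rightarrow> 5*k+6-2*i | Vbj j \<Rightarrow> 3*k+7+2*j)"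

lemma sum_dob_dist:
  assumes "k \<ge> 1" "u \<in> dob_V k"
  shows "sum (dob_dist u) (dob_V k) = dob_transmission k u"
proof (cases u)
  case (Vai i)
  with assms have i: "i < k" by (simp add: mem_dob_V)
  have "sum (dob_dist u) (dob_V k) = 11 + (\<Sum>l<k. if l = i then 0 else 2)
     + (\<Sum>j\<in>{1..<k}. if j \<le> i then 1 else 3)"
    by (simp add: Vai sum_dob_V)
  also have "\<dots> = 11 + 2 * (k - 1) + (min i (k - 1) + 3 * (k - 1 - i))"
    using i sum_if_eq_zero[of "{..<k}" i 2] sum_atLeastLessThan_if_le[where i=i and k=k] by simp
  finally show ?thesis using i by (simp add: Vai dob_transmission_def)
next
  case (Vbj j)
  with assms have j: "1 \<le> j" "j < k" by (simp_all add: mem_dob_V)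
  have "sum (dob_dist u) (dob_V k) = 11 + (\<Sum>i<k. if j \<le> i then 1 else 3)
     + (\<Sum>l\<in>{1..<k}. if l = j then 0 else 2)"
    using j by (simp add: Vbj sum_dob_V)
  also have "\<dots> = 11 + ((k - j) + 3 * min j k) + 2 * (k - 2)"
    using j sum_if_eq_zero[of "{1..<k}" j 2] sum_lessThan_if_ge[where j=j and k=k] by simp
  finally show ?thesis using j by (simp add: Vbj dob_transmission_def)
qed (use assms in \<open>simp_all add: sum_dob_V dob_transmission_def\<close>)

lemma transmission_dob:
  "k \<ge> 1 \<Longrightarrow> u \<in> dob_V k \<Longrightarrow> transmission (dob_V k) (dob_E k) u = dob_transmission k u"
  unfolding transmission_def by (simp add: gdist_dob sum_dob_dist cong: sum.cong)

lemma inj_on_dob_transmission: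
  assumes "k \<ge> 1"
  shows "inj_on (dob_transmission k) (dob_V k)"
proof
  fix u v assume "u \<in> dob_V k" "v \<in> dob_V k" "dob_transmission k u = dob_transmission k v"
  then show "u = v"
    using assms unfolding mem_dob_V dob_transmission_def
    by (cases u; cases v) (auto, presburger+) \<comment> \<open>\<open>5k+6-2i\<close> and \<open>3k+7+2j\<close> differ in parity\<close>
qed

lemma dob_transmission_image:
  assumes "k \<ge> 1"
  shows "dob_transmission k ` dob_V k = {3 * k + 4 .. 5 * k + 8}"
proof (rule card_subset_eq)
  show "dob_transmission k ` dob_V k \<subseteq> {3 * k + 4 .. 5 * k + 8}"
    using assms by (auto simp: mem_dob_V dob_transmission_def split: dvert.splits)
  show "card (dob_transmission k ` dob_V k) = card {3 * k + 4 .. 5 * k + 8}"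
    using assms by (simp add: card_image inj_on_dob_transmission card_dob_V)
qed simp

theorem theorem3:
  fixes k :: nat
  assumes "k \<ge> 1"
  shows "connected_graph (dob_V k) (dob_E k)
       \<and> card (dob_V k) = 2 * k + 5
       \<and> interval_transmission_irregular (dob_V k) (dob_E k)
       \<and> inj_on (transmission (dob_V k) (dob_E k)) (dob_V k)
       \<and> transmission (dob_V k) (dob_E k) ` dob_V k = {3 * k + 4 .. 5 * k + 8}"
proof -
  have transmission: "transmission (dob_V k) (dob_E k) u = dob_transmission k u"
    if "u \<in> dob_V k" for u
    using transmission_dob[OF assms that] .
  have inj: "inj_on (transmission (dob_V k) (dob_E k)) (dob_V k)"
    using inj_on_dob_transmission[OF assms] transmission by (simp cong: inj_on_cong)
  have image: "transmission (dob_V k) (dob_E k) ` dob_V k = {3 * k + 4 .. 5 * k + 8}"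
    using dob_transmission_image[OF assms] transmission by (simp cong: image_cong)
  have "interval_transmission_irregular (dob_V k) (dob_E k)"
    unfolding interval_transmission_irregular_def transmission_irregular_def
    using inj image by (intro conjI exI[of _ "3 * k + 4"] exI[of _ "5 * k + 8"]) simp_all
  then show ?thesis
    using connected_graph_if_bfs_labellings[OF bfs_labelling_dob_dist] card_dob_V[OF assms] inj image
    by simp
qed

end
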